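(* Let $0\le a<b$ and let $f:[a,b]\to[a,b]$ be a continuous map, with $[a,b]$ carrying the Euclidean metric. If $f$ has the shadowing property, then the set-valued map $F$ on $X=[-b,-a]\cup[a,b]$ defined by $F(x)=\{f(-x),-f(-x)\}$ for $x\in[-b,-a]$ and $F(x)=\{f(x),-f(x)\}$ for $x\in[a,b]$ also has the shadowing property.
   Context: A single-valued continuous map $f$ on a metric space $(Y,d)$ has the shadowing property if for every $\varepsilon>0$ there is $\delta>0$ such that for every sequence $\{x_n\}_{n\ge0}$ with $d(f(x_n),x_{n+1})<\delta$ for all $n$, there is $x\in Y$ with $d(f^n(x),x_n)<\varepsilon$ for all $n\ge 0$. For a set-valued map $F:X\to 2^X$ ($2^X$ = nonempty compact subsets), a $\delta$-pseudo-orbit is a sequence $\{x_n\}_{n\ge0}$ with $d(x_{n+1},F(x_n))<\delta$ for all $n$, and an $F$-orbit is a sequence $(y_n)_{n\ge0}$ with $y_{n+1}\in F(y_n)$ for all $n$; $F$ has the shadowing property if for every $\varepsilon>0$ there is $\delta>0$ such that for each $\delta$-pseudo-orbit $\{x_n\}$ there is an $F$-orbit $(y_n)$ with $d(x_n,y_n)<\varepsilon$ for all $n$. *)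

theory Defs
  imports "HOL-Analysis.Analysis"
begin

definition shadowing_on :: "'a::metric_space set \<Rightarrow> ('a \<Rightarrow> 'a) \<Rightarrow> bool" where
  "shadowing_on S f \<longleftrightarrow>
     (\<forall>e>0. \<exists>d>0. \<forall>xs::nat \<Rightarrow> 'a. (\<forall>n. xs n \<in> S) \<and> (\<forall>n. dist (f (xs n)) (xs (Suc n)) < d)
        \<longrightarrow> (\<exists>x\<in>S. \<forall>n. dist ((f ^^ n) x) (xs n) < e))"

definition sv_pseudo_orbit :: "'a::metric_space set \<Rightarrow> ('a \<Rightarrow> 'a set) \<Rightarrow> real \<Rightarrow> (nat \<Rightarrow> 'a) \<Rightarrow> bool" where
  "sv_pseudo_orbit X F d xs \<longleftrightarrow> (\<forall>n. xs n \<in> X) \<and> (\<forall>n. infdist (xs (Suc n)) (F (xs n)) < d)"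

definition sv_orbit :: "'a set \<Rightarrow> ('a \<Rightarrow> 'a set) \<Rightarrow> (nat \<Rightarrow> 'a) \<Rightarrow> bool" where
  "sv_orbit X F ys \<longleftrightarrow> (\<forall>n. ys n \<in> X) \<and> (\<forall>n. ys (Suc n) \<in> F (ys n))"

definition sv_shadowing_on :: "'a::metric_space set \<Rightarrow> ('a \<Rightarrow> 'a set) \<Rightarrow> bool" where
  "sv_shadowing_on X F \<longleftrightarrow>
     (\<forall>e>0. \<exists>d>0. \<forall>xs. sv_pseudo_orbit X F d xs \<longrightarrow>
        (\<exists>ys. sv_orbit X F ys \<and> (\<forall>n. dist (xs n) (ys n) < e)))"

end

theory Submission
  imports Defs
begin

text \<open>On \<open>X = -[a,b] \<union> [a,b]\<close> the map \<open>F\<close> is \<open>x \<mapsto> {f\<bar>x\<bar>, -f\<bar>x\<bar>}\<close>, and the distance from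
  \<open>u\<close> to \<open>{p, -p}\<close> is \<open>\<bar>\<bar>u\<bar> - p\<bar>\<close>. Hence the absolute values of a \<open>\<delta>\<close>-pseudo-orbit of \<open>F\<close> form a
  \<open>\<delta>\<close>-pseudo-orbit of \<open>f\<close>; an \<open>f\<close>-orbit shadowing it, with each point given the sign of the
  corresponding pseudo-orbit point, is an \<open>F\<close>-orbit shadowing the original sequence.\<close>

lemma infdist_plus_minus:
  fixes u p :: real
  assumes "0 \<le> p"
  shows "infdist u {p, -p} = \<bar>\<bar>u\<bar> - p\<bar>"
proof -
  have "infdist u {p, -p} = min \<bar>u - p\<bar> \<bar>u + p\<bar>"
    using infdist_Un_min[of "{p}" "{-p}" u] by (simp add: dist_real_def insert_commute)
  then show ?thesis
    using assms by (simp add: min_def abs_if)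
qed

lemma dist_signed_copy:
  fixes u y :: real
  assumes "0 \<le> y"
  shows "dist u (if 0 \<le> u then y else - y) = dist y \<bar>u\<bar>"
  using assms by (auto simp: dist_real_def)

lemma funpow_mem_invariant:
  assumes "f ` S \<subseteq> S" "x \<in> S"
  shows "(f ^^ n) x \<in> S"
  by (induction n) (use assms in auto)

lemma sv_shadowing_on_cong:
  assumes "\<And>x. x \<in> X \<Longrightarrow> F x = G x"
  shows "sv_shadowing_on X F \<longleftrightarrow> sv_shadowing_on X G"
proof -
  have "sv_pseudo_orbit X F d xs \<longleftrightarrow> sv_pseudo_orbit X G d xs" for d xs
    using assms by (auto simp: sv_pseudo_orbit_def)
  moreover have "sv_orbit X F ys \<longleftrightarrow> sv_orbit X G ys" for ys
    using assms by (auto simp: sv_orbit_def)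
  ultimately show ?thesis
    unfolding sv_shadowing_on_def by simp
qed

lemma abs_sv_pseudo_orbit_imp_pseudo_orbit:
  fixes S :: "real set"
  assumes "S \<subseteq> {0..}" "f ` S \<subseteq> S"
    and "sv_pseudo_orbit (uminus ` S \<union> S) (\<lambda>x. {f \<bar>x\<bar>, - f \<bar>x\<bar>}) d xs"
  shows "\<bar>xs n\<bar> \<in> S" and "dist (f \<bar>xs n\<bar>) \<bar>xs (Suc n)\<bar> < d"
proof -
  show abs_in: "\<bar>xs k\<bar> \<in> S" for k
  proof -
    have "xs k \<in> uminus ` S \<union> S"
      using assms(3) by (simp add: sv_pseudo_orbit_def)
    then consider s where "s \<in> S" "xs k = - s" | "xs k \<in> S"
      by blast
    then show ?thesis
      using assms(1) by cases (auto simp: subset_eq)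
  qed
  have "0 \<le> f \<bar>xs n\<bar>"
    using abs_in[of n] assms(1,2) by blast
  moreover have "infdist (xs (Suc n)) {f \<bar>xs n\<bar>, - f \<bar>xs n\<bar>} < d"
    using assms(3) by (simp add: sv_pseudo_orbit_def)
  ultimately show "dist (f \<bar>xs n\<bar>) \<bar>xs (Suc n)\<bar> < d"
    by (simp add: infdist_plus_minus dist_real_def abs_minus_commute)
qed

lemma signed_orbit_is_sv_orbit:
  fixes S :: "real set"
  assumes "S \<subseteq> {0..}" "f ` S \<subseteq> S" "x \<in> S"
  shows "sv_orbit (uminus ` S \<union> S) (\<lambda>x. {f \<bar>x\<bar>, - f \<bar>x\<bar>})
           (\<lambda>n. if 0 \<le> s n then (f ^^ n) x else - (f ^^ n) x)"
proof -
  have orbit: "(f ^^ n) x \<in> S" for n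
    using assms(2,3) by (rule funpow_mem_invariant)
  then have "\<bar>(f ^^ n) x\<bar> = (f ^^ n) x" for n
    using assms(1) by (auto simp: subset_eq)
  with orbit show ?thesis
    by (auto simp: sv_orbit_def)
qed

theorem sv_shadowing_on_symmetric_lift:
  fixes S :: "real set"
  assumes "S \<subseteq> {0..}" "f ` S \<subseteq> S" "shadowing_on S f"
  shows "sv_shadowing_on (uminus ` S \<union> S) (\<lambda>x. {f \<bar>x\<bar>, - f \<bar>x\<bar>})"
  unfolding sv_shadowing_on_def
proof (intro allI impI)
  fix e :: real
  assume "e > 0"
  then obtain d where "d > 0" and shadow: "\<And>zs. (\<forall>n. zs n \<in> S) \<Longrightarrow>
      (\<forall>n. dist (f (zs n)) (zs (Suc n)) < d) \<Longrightarrow> \<exists>x\<in>S. \<forall>n. dist ((f ^^ n) x) (zs n) < e"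
    using assms(3) unfolding shadowing_on_def by metis
  have "\<exists>ys. sv_orbit (uminus ` S \<union> S) (\<lambda>x. {f \<bar>x\<bar>, - f \<bar>x\<bar>}) ys \<and> (\<forall>n. dist (xs n) (ys n) < e)"
    if po: "sv_pseudo_orbit (uminus ` S \<union> S) (\<lambda>x. {f \<bar>x\<bar>, - f \<bar>x\<bar>}) d xs" for xs
  proof -
    obtain x where "x \<in> S" and close: "\<And>n. dist ((f ^^ n) x) \<bar>xs n\<bar> < e"
      using shadow[of "\<lambda>n. \<bar>xs n\<bar>"] abs_sv_pseudo_orbit_imp_pseudo_orbit[OF assms(1,2) po] by blast
    have "0 \<le> (f ^^ n) x" for n
      using funpow_mem_invariant[OF assms(2) \<open>x \<in> S\<close>] assms(1) by (auto simp: subset_eq)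
    then have "dist (xs n) (if 0 \<le> xs n then (f ^^ n) x else - (f ^^ n) x) < e" for n
      using close[of n] by (simp only: dist_signed_copy)
    then show ?thesis
      using signed_orbit_is_sv_orbit[OF assms(1,2) \<open>x \<in> S\<close>] by blast
  qed
  with \<open>d > 0\<close> show "\<exists>d>0. \<forall>xs. sv_pseudo_orbit (uminus ` S \<union> S) (\<lambda>x. {f \<bar>x\<bar>, - f \<bar>x\<bar>}) d xs \<longrightarrow>
      (\<exists>ys. sv_orbit (uminus ` S \<union> S) (\<lambda>x. {f \<bar>x\<bar>, - f \<bar>x\<bar>}) ys \<and> (\<forall>n. dist (xs n) (ys n) < e))"
    by blast
qed

theorem lemma3p17:
  fixes a b :: real and f :: "real \<Rightarrow> real"
  assumes "0 \<le> a" "a < b"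
    and "continuous_on {a..b} f"
    and "f ` {a..b} \<subseteq> {a..b}"
    and "shadowing_on {a..b} f"
  shows "sv_shadowing_on ({-b..-a} \<union> {a..b})
           (\<lambda>x. if x \<in> {-b..-a} then {f (-x), - f (-x)} else {f x, - f x})"
proof -
  have X: "{-b..-a} \<union> {a..b} = uminus ` {a..b} \<union> {a..b}"
    by simp
  have lift: "sv_shadowing_on ({-b..-a} \<union> {a..b}) (\<lambda>x. {f \<bar>x\<bar>, - f \<bar>x\<bar>})"
    unfolding X by (rule sv_shadowing_on_symmetric_lift) (use assms(1,4,5) in auto)
  have "(if x \<in> {-b..-a} then {f (-x), - f (-x)} else {f x, - f x}) = {f \<bar>x\<bar>, - f \<bar>x\<bar>}"
    if "x \<in> {-b..-a} \<union> {a..b}" for x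
    using that assms(1) by auto
  then show ?thesis
    using sv_shadowing_on_cong[of "{-b..-a} \<union> {a..b}"
        "\<lambda>x. if x \<in> {-b..-a} then {f (-x), - f (-x)} else {f x, - f x}"
        "\<lambda>x. {f \<bar>x\<bar>, - f \<bar>x\<bar>}"] lift
    by simp
qed

end
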